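(* Let $(X_1,\ldots,X_d)$ be a continuous random vector and assume (H1) and (H2) for $(X_1,\ldots,X_d)$ and for all perturbed vectors below. Suppose that for every $k\in\{1,\ldots,d\}$ there is $\epsilon_0>0$ such that for all $|\epsilon|<\epsilon_0$, $\mathbb{E}\big[\sup_{v\in[0,u]}|g_k'(v-(1+\epsilon)X_k)|\big]<\infty$. Then for every $i\in\{1,\ldots,d\}$, $\lim_{\epsilon\to0}A_{X_1,\ldots,X_{i-1},(1+\epsilon)X_i,X_{i+1},\ldots,X_d}(u)=A_{X_1,\ldots,X_d}(u)$.
   Context: For a vector $\mathbf Y=(Y_1,\ldots,Y_d)$ of nonnegative random variables and capital $u\ge0$, $\mathcal{U}^d_u=\{v\in[0,u]^d:\sum_kv_k=u\}$ and $I_{\mathbf Y}(v)=\sum_{k=1}^d\mathbb{E}[g_k(v_k-Y_k)\mathbf 1_{\{Y_k>v_k\}}\mathbf 1_{\{\sum_lY_l\le u\}}]$, with penalty functions $g_k:(-\infty,0]\to[0,\infty)$ that are $C^1$, convex, $g_k(0)=0$ (with $g_k'(x)$ understood as $0$ where the indicator vanishes). (H1): $I_{\mathbf Y}$ has a unique minimizer on $\mathcal{U}^d_u$, denoted $A_{Y_1,\ldots,Y_d}(u)$ (the optimal allocation). (H2): the $g_k$ are differentiable, the relevant $g_k'(v_k-Y_k)$ are integrable, and each $(Y_k,\sum_lY_l)$ has a joint density. *)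

theory Defs
  imports "HOL-Probability.Probability"
begin

text \<open>Components are indexed by a finite type 'd (so d = CARD('d)).
  A random vector is Y :: 'd => 'a => real on a probability space M.\<close>

definition alloc_set :: "real \<Rightarrow> ('d::finite \<Rightarrow> real) set" where
  "alloc_set u = {v. (\<forall>k. 0 \<le> v k \<and> v k \<le> u) \<and> (\<Sum>k\<in>UNIV. v k) = u}"

definition risk_I :: "'a measure \<Rightarrow> ('d::finite \<Rightarrow> real \<Rightarrow> real) \<Rightarrow> ('d \<Rightarrow> 'a \<Rightarrow> real)
    \<Rightarrow> real \<Rightarrow> ('d \<Rightarrow> real) \<Rightarrow> real" where
  "risk_I M g Y u v = (\<Sum>k\<in>UNIV. integral\<^sup>L M (\<lambda>\<omega>.
      g k (v k - Y k \<omega>) * indicator {x. x > v k} (Y k \<omega>)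
        * indicator {x. x \<le> u} (\<Sum>l\<in>UNIV. Y l \<omega>)))"

definition is_opt_alloc :: "'a measure \<Rightarrow> ('d::finite \<Rightarrow> real \<Rightarrow> real) \<Rightarrow> ('d \<Rightarrow> 'a \<Rightarrow> real)
    \<Rightarrow> real \<Rightarrow> ('d \<Rightarrow> real) \<Rightarrow> bool" where
  "is_opt_alloc M g Y u v \<longleftrightarrow> v \<in> alloc_set u \<and> (\<forall>w\<in>alloc_set u. risk_I M g Y u v \<le> risk_I M g Y u w)"

definition H1 :: "'a measure \<Rightarrow> ('d::finite \<Rightarrow> real \<Rightarrow> real) \<Rightarrow> ('d \<Rightarrow> 'a \<Rightarrow> real) \<Rightarrow> real \<Rightarrow> bool" where
  "H1 M g Y u \<longleftrightarrow> (\<exists>!v. is_opt_alloc M g Y u v)"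

definition opt_alloc :: "'a measure \<Rightarrow> ('d::finite \<Rightarrow> real \<Rightarrow> real) \<Rightarrow> ('d \<Rightarrow> 'a \<Rightarrow> real)
    \<Rightarrow> real \<Rightarrow> ('d \<Rightarrow> real)" where
  "opt_alloc M g Y u = (THE v. is_opt_alloc M g Y u v)"

definition H2 :: "'a measure \<Rightarrow> ('d::finite \<Rightarrow> real \<Rightarrow> real) \<Rightarrow> ('d \<Rightarrow> real \<Rightarrow> real)
    \<Rightarrow> ('d \<Rightarrow> 'a \<Rightarrow> real) \<Rightarrow> real \<Rightarrow> bool" where
  "H2 M g g' Y u \<longleftrightarrow>
     (\<forall>k. \<forall>x\<le>0. (g k has_real_derivative g' k x) (at x within {..0})) \<and>
     (\<forall>k. \<forall>v\<in>alloc_set u. integrable M (\<lambda>\<omega>.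
        g' k (v k - Y k \<omega>) * indicator {x. x > v k} (Y k \<omega>)
          * indicator {x. x \<le> u} (\<Sum>l\<in>UNIV. Y l \<omega>))) \<and>
     (\<forall>k. \<exists>f. distributed M (lborel \<Otimes>\<^sub>M lborel) (\<lambda>\<omega>. (Y k \<omega>, \<Sum>l\<in>UNIV. Y l \<omega>)) f)"

definition penalty :: "(real \<Rightarrow> real) \<Rightarrow> (real \<Rightarrow> real) \<Rightarrow> bool" where
  "penalty g g' \<longleftrightarrow> (\<forall>x\<le>0. (g has_real_derivative g' x) (at x within {..0}))
     \<and> continuous_on {..0} g' \<and> convex_on {..0} g \<and> g 0 = 0 \<and> (\<forall>x\<le>0. 0 \<le> g x)"

definition deriv0 :: "(real \<Rightarrow> real) \<Rightarrow> real \<Rightarrow> real" where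
  "deriv0 g' x = (if x \<le> 0 then g' x else 0)"

definition perturb :: "('d \<Rightarrow> 'a \<Rightarrow> real) \<Rightarrow> 'd \<Rightarrow> real \<Rightarrow> ('d \<Rightarrow> 'a \<Rightarrow> real)" where
  "perturb X i \<epsilon> = X(i := (\<lambda>\<omega>. (1 + \<epsilon>) * X i \<omega>))"

end

theory Submission
  imports Defs
begin

text \<open>The optimal allocation is the unique minimiser of I over the compact simplex
  \<open>alloc_set u\<close>, so its continuity in \<open>\<epsilon>\<close> follows from the continuity of
  \<open>(\<epsilon>, v) \<mapsto> I_{X^\<epsilon>}(v)\<close> by the usual argmin argument: every subsequential limit of
  the perturbed minimisers is a minimiser for \<open>X\<close>, hence equals \<open>A_X(u)\<close>.
  The joint continuity is dominated convergence: on \<open>{\<Sum>Y \<le> u}\<close> the penalty is evaluated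
  on the compact interval \<open>[-u, 0]\<close>, where it is bounded, and the indicator of
  \<open>{\<Sum>X \<le> u}\<close> converges off the null set \<open>{\<Sum>X = u}\<close>, which is null because
  \<open>(X_k, \<Sum>X)\<close> has a joint density.\<close>

lemma alloc_set_seq_compact:
  fixes a :: "nat \<Rightarrow> 'd::finite \<Rightarrow> real"
  assumes "\<And>n. a n \<in> alloc_set u"
  obtains r :: "nat \<Rightarrow> nat" and w where "strict_mono r" "w \<in> alloc_set u" "\<And>k. (\<lambda>n. a (r n) k) \<longlonglongrightarrow> w k"
proof -
  define K :: "(real^'d) set" where
    "K = {x. (\<forall>j. 0 \<le> x$j \<and> x$j \<le> u) \<and> (\<Sum>j\<in>UNIV. x$j) = u}"
  have "closed K" unfolding K_def
    by (intro closed_Collect_conj closed_Collect_all closed_Collect_le closed_Collect_eq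
        continuous_intros)
  moreover have "bounded K"
    by (rule bounded_subset[OF bounded_cbox[of 0 "\<chi> _. u"]]) (auto simp: K_def mem_box_cart)
  ultimately have "seq_compact K"
    by (intro compact_imp_seq_compact) (simp add: compact_eq_bounded_closed)
  moreover have "(\<chi> j. a n j) \<in> K" for n
    using assms[of n] by (simp add: K_def alloc_set_def)
  ultimately obtain x r where x: "x \<in> K" "strict_mono r" "((\<lambda>n. \<chi> j. a n j) \<circ> r) \<longlonglongrightarrow> x"
    unfolding seq_compact_def by meson
  show thesis
  proof
    show "strict_mono r" by fact
    show "(\<lambda>j. x $ j) \<in> alloc_set u" using x(1) by (simp add: K_def alloc_set_def)
    show "(\<lambda>n. a (r n) k) \<longlonglongrightarrow> x $ k" for k
      using tendsto_vec_nth[OF x(3), of k] by (simp add: o_def)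
  qed
qed

lemma alloc_set_LIMSEQ_of_subseq_limits:
  fixes a :: "nat \<Rightarrow> 'd::finite \<Rightarrow> real"
  assumes "\<And>n. a n \<in> alloc_set u"
    and "\<And>(r :: nat \<Rightarrow> nat) w. strict_mono r \<Longrightarrow> w \<in> alloc_set u \<Longrightarrow> (\<And>k. (\<lambda>n. a (r n) k) \<longlonglongrightarrow> w k)
           \<Longrightarrow> w = L"
  shows "(\<lambda>n. a n k) \<longlonglongrightarrow> L k"
proof (rule ccontr)
  assume "\<not> (\<lambda>n. a n k) \<longlonglongrightarrow> L k"
  then obtain e where e: "e > 0" "\<forall>N. \<exists>n\<ge>N. \<not> dist (a n k) (L k) < e"
    unfolding LIMSEQ_def by auto
  then have "infinite {n. \<not> dist (a n k) (L k) < e}"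
    unfolding infinite_nat_iff_unbounded_le by simp
  then obtain r :: "nat \<Rightarrow> nat" where r: "strict_mono r" "\<And>n. \<not> dist (a (r n) k) (L k) < e"
    using infinite_enumerate by blast
  obtain r' :: "nat \<Rightarrow> nat" and w where w: "strict_mono r'" "w \<in> alloc_set u" "\<And>j. (\<lambda>n. a (r (r' n)) j) \<longlonglongrightarrow> w j"
    using alloc_set_seq_compact[of "\<lambda>n. a (r n)"] assms(1) by blast
  have "w = L"
    using assms(2)[of "r \<circ> r'" w] w r(1) by (simp add: strict_mono_o)
  with w(3)[of k] e(1) have "eventually (\<lambda>n. dist (a (r (r' n)) k) (L k) < e) sequentially"
    by (simp add: tendsto_iff)
  then obtain N where "dist (a (r (r' N)) k) (L k) < e"
    using eventually_sequentially by auto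
  with r(2) show False by blast
qed

lemma risk_I_eq_min:
  assumes "\<And>k. g k 0 = 0"
  shows "risk_I M g Y u v = (\<Sum>k\<in>UNIV. integral\<^sup>L M (\<lambda>\<omega>.
      g k (min (v k - Y k \<omega>) 0) * indicator {..u} (\<Sum>l\<in>UNIV. Y l \<omega>)))"
  unfolding risk_I_def
  by (intro sum.cong refl arg_cong[where f="integral\<^sup>L M"] ext)
     (use assms in \<open>auto simp: indicator_def min_def\<close>)

lemma AE_neq_of_joint_density:
  fixes Z S :: "'a \<Rightarrow> real"
  assumes "distributed M (lborel \<Otimes>\<^sub>M lborel) (\<lambda>\<omega>. (Z \<omega>, S \<omega>)) f"
  shows "AE \<omega> in M. S \<omega> \<noteq> u"
proof -
  let ?A = "(UNIV::real set) \<times> {u}"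
  have null: "?A \<in> null_sets (lborel \<Otimes>\<^sub>M lborel)"
    by (rule lborel.times_in_null_sets2) auto
  have "emeasure M ((\<lambda>\<omega>. (Z \<omega>, S \<omega>)) -` ?A \<inter> space M)
      = (\<integral>\<^sup>+x. f x * indicator ?A x \<partial>(lborel \<Otimes>\<^sub>M lborel))"
    using distributed_emeasure[OF assms] null by auto
  also have "\<dots> = 0"
    by (rule nn_integral_null_set[OF null])
  finally have "(\<lambda>\<omega>. (Z \<omega>, S \<omega>)) -` ?A \<inter> space M \<in> null_sets M"
    using distributed_measurable[OF assms] null
    by (auto simp: null_sets_def intro!: measurable_sets)
  from AE_not_in[OF this] AE_space show ?thesis
    by eventually_elim auto
qed

lemma indicator_atMost_tendsto:
  fixes f :: "nat \<Rightarrow> real"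
  assumes "f \<longlonglongrightarrow> x" "x \<noteq> u"
  shows "(\<lambda>n. indicator {..u} (f n) :: real) \<longlonglongrightarrow> indicator {..u} x"
proof (rule tendsto_eventually)
  consider "x < u" | "x > u" using assms(2) by linarith
  then show "\<forall>\<^sub>F n in sequentially. indicator {..u} (f n) = (indicator {..u} x :: real)"
  proof cases
    case 1
    from order_tendstoD(2)[OF assms(1) 1] show ?thesis
      by (rule eventually_mono) (use 1 in \<open>auto simp: indicator_def\<close>)
  next
    case 2
    from order_tendstoD(1)[OF assms(1) 2] show ?thesis
      by (rule eventually_mono) (use 2 in \<open>auto simp: indicator_def\<close>)
  qed
qed

lemma risk_I_tendsto:
  fixes M :: "'a measure" and X :: "'d::finite \<Rightarrow> 'a \<Rightarrow> real"
    and Y :: "nat \<Rightarrow> 'd \<Rightarrow> 'a \<Rightarrow> real" and a :: "nat \<Rightarrow> 'd \<Rightarrow> real"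
  assumes "prob_space M" and "u \<ge> 0"
    and X_meas: "\<And>k. X k \<in> borel_measurable M"
    and Y_meas: "\<And>n k. Y n k \<in> borel_measurable M"
    and Y_nonneg: "\<And>n k \<omega>. \<omega> \<in> space M \<Longrightarrow> Y n k \<omega> \<ge> 0"
    and Y_lim: "\<And>k \<omega>. (\<lambda>n. Y n k \<omega>) \<longlonglongrightarrow> X k \<omega>"
    and g_cont: "\<And>k. continuous_on {..0} (g k)" and g0: "\<And>k. g k 0 = 0"
    and AE_neq: "AE \<omega> in M. (\<Sum>l\<in>UNIV. X l \<omega>) \<noteq> u"
    and a: "\<And>n. a n \<in> alloc_set u" "\<And>k. (\<lambda>n. a n k) \<longlonglongrightarrow> w k"
  shows "(\<lambda>n. risk_I M g (Y n) u (a n)) \<longlonglongrightarrow> risk_I M g X u w"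
  unfolding risk_I_eq_min[of g, OF g0]
proof (rule tendsto_sum)
  interpret prob_space M by fact
  fix k
  define h where "h x = g k (min x 0)" for x
  have "continuous_on UNIV h"
    unfolding h_def by (intro continuous_on_compose2[OF g_cont[of k]] continuous_intros) auto
  then have h_cont: "isCont h x" for x
    by (simp add: continuous_on_eq_continuous_at)
  have [measurable]: "h \<in> borel_measurable borel"
    by (rule borel_measurable_continuous_onI) fact
  note [measurable] = X_meas Y_meas
  have "bounded (g k ` {-u..0})"
    by (intro compact_imp_bounded compact_continuous_image continuous_on_subset[OF g_cont]) auto
  then obtain B where B: "\<forall>x\<in>{-u..0}. \<bar>g k x\<bar> \<le> B"
    by (auto simp: bounded_iff)
  have "B \<ge> 0" using B \<open>u \<ge> 0\<close> by force
  have "(\<lambda>n. \<integral>\<omega>. h (a n k - Y n k \<omega>) * indicator {..u} (\<Sum>l\<in>UNIV. Y n l \<omega>) \<partial>M)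
      \<longlonglongrightarrow> (\<integral>\<omega>. h (w k - X k \<omega>) * indicator {..u} (\<Sum>l\<in>UNIV. X l \<omega>) \<partial>M)"
  proof (rule integral_dominated_convergence[where w="\<lambda>_. B"])
    show "AE \<omega> in M. (\<lambda>n. h (a n k - Y n k \<omega>) * indicator {..u} (\<Sum>l\<in>UNIV. Y n l \<omega>))
        \<longlonglongrightarrow> h (w k - X k \<omega>) * indicator {..u} (\<Sum>l\<in>UNIV. X l \<omega>)"
      using AE_neq
    proof eventually_elim
      case (elim \<omega>)
      have "(\<lambda>n. h (a n k - Y n k \<omega>)) \<longlonglongrightarrow> h (w k - X k \<omega>)"
        by (rule isCont_tendsto_compose[OF h_cont]) (intro tendsto_intros a(2) Y_lim)
      moreover have "(\<lambda>n. indicator {..u} (\<Sum>l\<in>UNIV. Y n l \<omega>) :: real)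
          \<longlonglongrightarrow> indicator {..u} (\<Sum>l\<in>UNIV. X l \<omega>)"
        by (intro indicator_atMost_tendsto tendsto_sum Y_lim elim)
      ultimately show ?case by (rule tendsto_mult)
    qed
    show "AE \<omega> in M. norm (h (a n k - Y n k \<omega>) * indicator {..u} (\<Sum>l\<in>UNIV. Y n l \<omega>)) \<le> B" for n
      using AE_space
    proof eventually_elim
      case (elim \<omega>)
      show ?case
      proof (cases "(\<Sum>l\<in>UNIV. Y n l \<omega>) \<le> u")
        case True
        have "Y n k \<omega> \<le> (\<Sum>l\<in>UNIV. Y n l \<omega>)"
          by (rule member_le_sum) (auto intro: Y_nonneg elim)
        moreover have "a n k \<ge> 0" using a(1)[of n] by (simp add: alloc_set_def)
        ultimately have "min (a n k - Y n k \<omega>) 0 \<in> {-u..0}" using True \<open>u \<ge> 0\<close> by auto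
        then show ?thesis using True B by (simp add: h_def indicator_def)
      qed (simp add: indicator_def \<open>B \<ge> 0\<close>)
    qed
  qed measurable
  then show "(\<lambda>n. \<integral>\<omega>. g k (min (a n k - Y n k \<omega>) 0) * indicator {..u} (\<Sum>l\<in>UNIV. Y n l \<omega>) \<partial>M)
      \<longlonglongrightarrow> (\<integral>\<omega>. g k (min (w k - X k \<omega>) 0) * indicator {..u} (\<Sum>l\<in>UNIV. X l \<omega>) \<partial>M)"
    by (simp only: h_def)
qed

lemma opt_alloc_is_opt_alloc:
  assumes "H1 M g Y u"
  shows "is_opt_alloc M g Y u (opt_alloc M g Y u)"
  using assms unfolding H1_def opt_alloc_def by (rule theI')

lemma opt_alloc_unique:
  "H1 M g Y u \<Longrightarrow> is_opt_alloc M g Y u v \<Longrightarrow> v = opt_alloc M g Y u"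
  unfolding H1_def opt_alloc_def by (metis the1_equality)

lemma opt_alloc_tendsto:
  fixes M :: "'a measure" and X :: "'d::finite \<Rightarrow> 'a \<Rightarrow> real"
    and Y :: "nat \<Rightarrow> 'd \<Rightarrow> 'a \<Rightarrow> real"
  assumes "prob_space M" and "u \<ge> 0"
    and "\<And>k. X k \<in> borel_measurable M"
    and "\<And>n k. Y n k \<in> borel_measurable M"
    and "\<And>n k \<omega>. \<omega> \<in> space M \<Longrightarrow> Y n k \<omega> \<ge> 0"
    and Y_lim: "\<And>k \<omega>. (\<lambda>n. Y n k \<omega>) \<longlonglongrightarrow> X k \<omega>"
    and "\<And>k. continuous_on {..0} (g k)" and "\<And>k. g k 0 = 0"
    and "AE \<omega> in M. (\<Sum>l\<in>UNIV. X l \<omega>) \<noteq> u"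
    and H1_X: "H1 M g X u" and H1_Y: "\<And>n. H1 M g (Y n) u"
  shows "(\<lambda>n. opt_alloc M g (Y n) u k) \<longlonglongrightarrow> opt_alloc M g X u k"
proof (rule alloc_set_LIMSEQ_of_subseq_limits)
  have opt: "is_opt_alloc M g (Y n) u (opt_alloc M g (Y n) u)" for n
    using H1_Y by (rule opt_alloc_is_opt_alloc)
  then show "opt_alloc M g (Y n) u \<in> alloc_set u" for n
    by (simp add: is_opt_alloc_def)
  fix r :: "nat \<Rightarrow> nat" and w :: "'d \<Rightarrow> real"
  assume r: "strict_mono r" and w: "w \<in> alloc_set u"
    and lim: "\<And>k. (\<lambda>n. opt_alloc M g (Y (r n)) u k) \<longlonglongrightarrow> w k"
  have risk_lim: "(\<lambda>n. risk_I M g (Y (r n)) u (a n)) \<longlonglongrightarrow> risk_I M g X u v"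
    if "\<And>n. a n \<in> alloc_set u" "\<And>k. (\<lambda>n. a n k) \<longlonglongrightarrow> v k" for a :: "nat \<Rightarrow> 'd \<Rightarrow> real" and v
    using LIMSEQ_subseq_LIMSEQ[OF Y_lim r]
    by (intro risk_I_tendsto[where Y="\<lambda>n. Y (r n)"] assms that) (simp_all add: o_def)
  have "is_opt_alloc M g X u w"
    unfolding is_opt_alloc_def
  proof (intro conjI ballI w)
    fix v :: "'d \<Rightarrow> real" assume v: "v \<in> alloc_set u"
    show "risk_I M g X u w \<le> risk_I M g X u v"
    proof (rule LIMSEQ_le)
      show "(\<lambda>n. risk_I M g (Y (r n)) u (opt_alloc M g (Y (r n)) u)) \<longlonglongrightarrow> risk_I M g X u w"
        using opt by (intro risk_lim lim) (simp add: is_opt_alloc_def)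
      show "(\<lambda>n. risk_I M g (Y (r n)) u v) \<longlonglongrightarrow> risk_I M g X u v"
        using v by (intro risk_lim) auto
      show "\<exists>N. \<forall>n\<ge>N. risk_I M g (Y (r n)) u (opt_alloc M g (Y (r n)) u) \<le> risk_I M g (Y (r n)) u v"
        using opt v by (auto simp: is_opt_alloc_def)
    qed
  qed
  then show "w = opt_alloc M g X u"
    using H1_X by (intro opt_alloc_unique)
qed

lemma perturb_tendsto:
  assumes "e \<longlonglongrightarrow> 0"
  shows "(\<lambda>n. perturb X i (e n) k \<omega>) \<longlonglongrightarrow> X k \<omega>"
proof -
  have "(\<lambda>n. (1 + e n) * X i \<omega>) \<longlonglongrightarrow> (1 + 0) * X i \<omega>"
    by (intro tendsto_intros assms)
  then show ?thesis by (cases "k = i") (simp_all add: perturb_def)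
qed

lemma perturb_nonneg:
  assumes "\<epsilon> \<ge> -1" "\<And>k. X k \<omega> \<ge> 0"
  shows "perturb X i \<epsilon> k \<omega> \<ge> 0"
  using assms by (simp add: perturb_def)

lemma opt_alloc_perturb_LIMSEQ:
  fixes M :: "'a measure" and X :: "'d::finite \<Rightarrow> 'a \<Rightarrow> real"
  assumes "prob_space M" and "u \<ge> 0"
    and X_meas: "\<And>k. X k \<in> borel_measurable M"
    and X_nonneg: "\<And>k \<omega>. \<omega> \<in> space M \<Longrightarrow> X k \<omega> \<ge> 0"
    and "\<And>k. continuous_on {..0} (g k)" and "\<And>k. g k 0 = 0"
    and "AE \<omega> in M. (\<Sum>l\<in>UNIV. X l \<omega>) \<noteq> u"
    and "H1 M g X u"
    and e: "e \<longlonglongrightarrow> 0" "\<And>n. e n \<ge> -1" "\<And>n. H1 M g (perturb X i (e n)) u"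
  shows "(\<lambda>n. opt_alloc M g (perturb X i (e n)) u k) \<longlonglongrightarrow> opt_alloc M g X u k"
proof (rule opt_alloc_tendsto)
  show "perturb X i (e n) k \<omega> \<ge> 0" if "\<omega> \<in> space M" for n k \<omega>
    using X_nonneg that e(2) by (intro perturb_nonneg) auto
  show "perturb X i (e n) k \<in> borel_measurable M" for n k
    using X_meas by (simp add: perturb_def)
qed (use assms perturb_tendsto in auto)

theorem mainTheorem7:
  fixes M :: "'a measure" and X :: "'d::finite \<Rightarrow> 'a \<Rightarrow> real"
    and g g' :: "'d \<Rightarrow> real \<Rightarrow> real" and u :: real
  assumes "prob_space M"
    and "u \<ge> 0"
    and "\<And>k. X k \<in> borel_measurable M"
    and "\<And>k \<omega>. \<omega> \<in> space M \<Longrightarrow> X k \<omega> \<ge> 0"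
    and "\<exists>f. distributed M lborel (\<lambda>\<omega>. \<chi> k. X k \<omega>) f"
    and "\<And>k. penalty (g k) (g' k)"
    and "H1 M g X u" and "H2 M g g' X u"
    and "\<And>i. \<forall>\<^sub>F \<epsilon> in at 0. H1 M g (perturb X i \<epsilon>) u \<and> H2 M g g' (perturb X i \<epsilon>) u"
    and "\<And>k. \<exists>\<epsilon>0>0. \<forall>\<epsilon>. \<bar>\<epsilon>\<bar> < \<epsilon>0 \<longrightarrow>
           (\<integral>\<^sup>+\<omega>. ennreal (SUP v\<in>{0..u}. \<bar>deriv0 (g' k) (v - (1 + \<epsilon>) * X k \<omega>)\<bar>) \<partial>M) < \<infinity>"
  shows "\<forall>i k. ((\<lambda>\<epsilon>. opt_alloc M g (perturb X i \<epsilon>) u k) \<longlongrightarrow> opt_alloc M g X u k) (at 0)"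
proof (intro allI)
  fix i k
  have g_cont: "continuous_on {..0} (g k)" and g0: "g k 0 = 0" for k
    using assms(6)[of k] unfolding penalty_def by (auto intro!: DERIV_continuous_on)
  from assms(8) obtain k0 f where "distributed M (lborel \<Otimes>\<^sub>M lborel) (\<lambda>\<omega>. (X k0 \<omega>, \<Sum>l\<in>UNIV. X l \<omega>)) f"
    unfolding H2_def by blast
  then have AE_neq: "AE \<omega> in M. (\<Sum>l\<in>UNIV. X l \<omega>) \<noteq> u"
    by (rule AE_neq_of_joint_density)
  obtain d where "d > 0" and H1_near: "\<And>\<epsilon>. \<epsilon> \<noteq> 0 \<Longrightarrow> \<bar>\<epsilon>\<bar> < d \<Longrightarrow> H1 M g (perturb X i \<epsilon>) u"
    using assms(9)[of i] unfolding eventually_at by (auto simp: dist_real_def)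
  let ?T = "ball 0 (min d 1) :: real set"
  have at_T: "at 0 within ?T = at 0"
    using \<open>d > 0\<close> by (intro at_within_open) auto
  show "((\<lambda>\<epsilon>. opt_alloc M g (perturb X i \<epsilon>) u k) \<longlongrightarrow> opt_alloc M g X u k) (at 0)"
    unfolding at_T[symmetric] tendsto_at_iff_sequentially o_def
  proof (intro allI impI)
    fix e :: "nat \<Rightarrow> real" assume e: "\<forall>n. e n \<in> ?T - {0}" "e \<longlonglongrightarrow> 0"
    have e_small: "e n \<noteq> 0 \<and> \<bar>e n\<bar> < d \<and> \<bar>e n\<bar> < 1" for n
      using e(1) by auto
    have "H1 M g (perturb X i (e n)) u" and "e n \<ge> -1" for n
      using H1_near[of "e n"] e_small[of n] by auto
    with e(2) show "(\<lambda>n. opt_alloc M g (perturb X i (e n)) u k) \<longlonglongrightarrow> opt_alloc M g X u k"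
      by (intro opt_alloc_perturb_LIMSEQ assms(1-4,7) g_cont g0 AE_neq)
  qed
qed

end
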